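(* Stutter-equivalence of teams has the following properties: (1) If $T$ is a stutter-free team, then $T=T[f]$ for every stuttering function $f$ of $T$. (2) For every team $T$ there is a unique stutter-free team that is stutter-equivalent to $T$. (3) Stutter-equivalence $\equiv_{\mathrm{st}}$ is reflexive, symmetric and transitive on teams. (4) Every $\equiv_{\mathrm{st}}$-equivalence class contains exactly one stutter-free team.
   Context: A trace is an infinite sequence $t=t(0)t(1)\cdots$ of subsets of a set $\mathrm{AP}$ of propositions; a team is a set of traces. A stuttering function of a trace $t$ is a strictly increasing function $f:\mathbb N\to\mathbb N$ with $f(0)=0$ such that $t(f(k))=t(f(k)+1)=\cdots=t(f(k+1)-1)$ for all $k\ge0$. A stuttering function of a team $T$ is a function that is a stuttering function of every $t\in T$. For $f:\mathbb N\to\mathbb N$, $t[f]:=t(f(0))t(f(1))t(f(2))\cdots$ and $T[f]:=\{t[f]:t\in T\}$. Teams $T,T'$ are stutter-equivalent ($T\equiv_{\mathrm{st}}T'$) if there are a stuttering function $f$ of $T$ and a stuttering function $f'$ of $T'$ with $T[f]=T'[f']$. A team $T$ has a stuttering position $i$ if $t(i)=t(i+1)$ for all $t\in T$, but there exist $t\in T$ and $j>i+1$ with $t(i)\neq t(j)$. A team with no stuttering position is stutter-free. *)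

theory Defs
  imports Main
begin

text \<open>Atomic propositions are the elements of the type 'a (AP = UNIV).
  A trace is an infinite sequence of subsets of AP; a team is a set of traces.\<close>

type_synonym 'a trace = "nat \<Rightarrow> 'a set"
type_synonym 'a team = "'a trace set"

definition stuttering_fun :: "'a trace \<Rightarrow> (nat \<Rightarrow> nat) \<Rightarrow> bool" where
  "stuttering_fun t f \<longleftrightarrow> strict_mono f \<and> f 0 = 0 \<and>
     (\<forall>k i. f k \<le> i \<and> i < f (Suc k) \<longrightarrow> t i = t (f k))"

definition team_stuttering_fun :: "'a team \<Rightarrow> (nat \<Rightarrow> nat) \<Rightarrow> bool" where
  "team_stuttering_fun T f \<longleftrightarrow> (\<forall>t\<in>T. stuttering_fun t f)"

definition trace_at :: "'a trace \<Rightarrow> (nat \<Rightarrow> nat) \<Rightarrow> 'a trace" where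
  "trace_at t f = (\<lambda>k. t (f k))"

definition team_at :: "'a team \<Rightarrow> (nat \<Rightarrow> nat) \<Rightarrow> 'a team" where
  "team_at T f = (\<lambda>t. trace_at t f) ` T"

definition stutter_equiv :: "'a team \<Rightarrow> 'a team \<Rightarrow> bool" where
  "stutter_equiv T T' \<longleftrightarrow> (\<exists>f f'. team_stuttering_fun T f \<and> team_stuttering_fun T' f' \<and>
      team_at T f = team_at T' f')"

definition stuttering_position :: "'a team \<Rightarrow> nat \<Rightarrow> bool" where
  "stuttering_position T i \<longleftrightarrow> (\<forall>t\<in>T. t i = t (Suc i)) \<and>
      (\<exists>t\<in>T. \<exists>j. j > Suc i \<and> t i \<noteq> t j)"

definition stutter_free :: "'a team \<Rightarrow> bool" where
  "stutter_free T \<longleftrightarrow> \<not> (\<exists>i. stuttering_position T i)"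

end

theory Submission
  imports Defs
begin

text \<open>A team without stuttering position is one in which, at every position, either some trace
  changes in the next step or all traces are constant from there on. Call a stuttering function
  \<open>g\<close> of \<open>T\<close> a reduction if \<open>T[g]\<close> is stutter-free. Then after every position \<open>g k\<close> from
  which \<open>T\<close> is not constant, \<open>g (k+1)\<close> must be the first later position where some trace
  differs from its value at \<open>g k\<close>; hence all reductions agree up to the point where \<open>T\<close> becomes
  constant, and they all produce the same team. The greedy choice of next change points is a
  reduction, which gives the normal form \<open>destutter T\<close>. Since stuttering functions compose,
  \<open>T[f]\<close> has the same normal form as \<open>T\<close>, so \<open>T \<equiv>\<^sub>s\<^sub>t T'\<close> iff their normal forms coincide,
  and everything follows.\<close>

definition constant_from :: "'a team \<Rightarrow> nat \<Rightarrow> bool" where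
  "constant_from T p \<longleftrightarrow> (\<forall>t\<in>T. \<forall>j\<ge>p. t j = t p)"

lemma constant_from_mono: "constant_from T p \<Longrightarrow> p \<le> q \<Longrightarrow> constant_from T q"
  unfolding constant_from_def by (metis order_trans)

lemma constant_from_same_value:
  assumes "constant_from T p" "constant_from T q" "t \<in> T"
  shows "t p = t q"
  using assms unfolding constant_from_def by (metis nle_le)

lemma not_stuttering_position_iff:
  "\<not> stuttering_position T i \<longleftrightarrow> (\<exists>t\<in>T. t i \<noteq> t (Suc i)) \<or> constant_from T i"
proof
  assume not_sp: "\<not> stuttering_position T i"
  show "(\<exists>t\<in>T. t i \<noteq> t (Suc i)) \<or> constant_from T i"
  proof (cases "\<exists>t\<in>T. t i \<noteq> t (Suc i)")
    case False
    then have step: "\<forall>t\<in>T. t i = t (Suc i)" by simp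
    with not_sp have later: "\<forall>t\<in>T. \<forall>j>Suc i. t i = t j" unfolding stuttering_position_def by simp
    have "constant_from T i" unfolding constant_from_def
    proof (intro ballI allI impI)
      fix t j assume t: "t \<in> T" and "i \<le> j"
      then consider "j = i" | "j = Suc i" | "Suc i < j" by linarith
      then show "t j = t i"
      proof cases
        case 1 then show ?thesis by simp
      next
        case 2 then show ?thesis using bspec[OF step t] by simp
      next
        case 3 then show ?thesis using bspec[OF later t] by simp
      qed
    qed
    then show ?thesis ..
  qed simp
next
  assume "(\<exists>t\<in>T. t i \<noteq> t (Suc i)) \<or> constant_from T i"
  then show "\<not> stuttering_position T i"
    unfolding stuttering_position_def constant_from_def by (metis Suc_lessD less_imp_le)
qed

lemma stutter_free_iff:
  "stutter_free T \<longleftrightarrow> (\<forall>i. (\<exists>t\<in>T. t i \<noteq> t (Suc i)) \<or> constant_from T i)"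
  unfolding stutter_free_def not_stuttering_position_iff[symmetric] by blast

lemma stuttering_funD:
  assumes "stuttering_fun t g"
  shows "strict_mono g" "g 0 = 0" "g k \<le> i \<Longrightarrow> i < g (Suc k) \<Longrightarrow> t i = t (g k)"
  using assms unfolding stuttering_fun_def by blast+

lemma strict_mono_block:
  assumes "strict_mono (g :: nat \<Rightarrow> nat)" "g 0 = 0"
  obtains m where "g m \<le> i" "i < g (Suc m)"
proof -
  have ex: "\<exists>m. i < g (Suc m)"
    using strict_mono_imp_increasing[OF assms(1), of "Suc i"] by (metis Suc_le_lessD)
  define m where "m = (LEAST m. i < g (Suc m))"
  have "i < g (Suc m)" unfolding m_def using ex by (rule LeastI_ex)
  moreover have "g m \<le> i"
  proof (cases m)
    case (Suc m')
    then have "\<not> i < g (Suc m')" using m_def not_less_Least[of m' "\<lambda>m. i < g (Suc m)"] by simp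
    then show ?thesis using Suc by simp
  qed (use assms in simp)
  ultimately show thesis using that by blast
qed

lemma ball_team_at: "(\<forall>u\<in>team_at T g. P u) \<longleftrightarrow> (\<forall>t\<in>T. P (\<lambda>k. t (g k)))"
  unfolding team_at_def trace_at_def by blast

lemma bex_team_at: "(\<exists>u\<in>team_at T g. P u) \<longleftrightarrow> (\<exists>t\<in>T. P (\<lambda>k. t (g k)))"
  unfolding team_at_def trace_at_def by blast

lemma stuttering_fun_constant_from:
  assumes st: "stuttering_fun t g"
  shows "(\<forall>j\<ge>k. t (g j) = t (g k)) \<longleftrightarrow> (\<forall>j\<ge>g k. t j = t (g k))"
proof
  assume const: "\<forall>j\<ge>k. t (g j) = t (g k)"
  show "\<forall>j\<ge>g k. t j = t (g k)"
  proof (intro allI impI)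
    fix j assume j: "g k \<le> j"
    obtain m where m: "g m \<le> j" "j < g (Suc m)"
      using strict_mono_block[OF stuttering_funD(1,2)[OF st]] .
    have "k \<le> m"
      using j m(2) strict_mono_less[OF stuttering_funD(1)[OF st]] by (metis le_less_trans less_Suc_eq_le)
    then show "t j = t (g k)" using stuttering_funD(3)[OF st m] const[rule_format, of m] by simp
  qed
next
  assume const: "\<forall>j\<ge>g k. t j = t (g k)"
  show "\<forall>j\<ge>k. t (g j) = t (g k)"
  proof (intro allI impI)
    fix j assume "k \<le> j"
    then have "g k \<le> g j" using strict_mono_less_eq[OF stuttering_funD(1)[OF st]] by simp
    then show "t (g j) = t (g k)" using const[rule_format, of "g j"] by simp
  qed
qed

lemma constant_from_team_at:
  assumes "team_stuttering_fun T g"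
  shows "constant_from (team_at T g) k \<longleftrightarrow> constant_from T (g k)"
  unfolding constant_from_def ball_team_at
  by (rule ball_cong[OF refl], rule stuttering_fun_constant_from)
    (use assms in \<open>simp add: team_stuttering_fun_def\<close>)

lemma stutter_free_team_at_iff:
  assumes "team_stuttering_fun T g"
  shows "stutter_free (team_at T g) \<longleftrightarrow>
    (\<forall>k. (\<exists>t\<in>T. t (g k) \<noteq> t (g (Suc k))) \<or> constant_from T (g k))"
  unfolding stutter_free_iff constant_from_team_at[OF assms, symmetric] bex_team_at ..

definition next_change :: "'a team \<Rightarrow> nat \<Rightarrow> nat" where
  "next_change T p = (if \<exists>j>p. \<exists>t\<in>T. t j \<noteq> t p
     then LEAST j. p < j \<and> (\<exists>t\<in>T. t j \<noteq> t p) else Suc p)"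

lemma next_change_changes:
  assumes "\<exists>j>p. \<exists>t\<in>T. t j \<noteq> t p"
  shows "p < next_change T p \<and> (\<exists>t\<in>T. t (next_change T p) \<noteq> t p)"
  unfolding next_change_def if_P[OF assms] using assms by (rule LeastI_ex)

lemma not_constant_from_change:
  assumes "\<not> constant_from T p"
  shows "\<exists>j>p. \<exists>t\<in>T. t j \<noteq> t p"
proof -
  obtain t j where "t \<in> T" "p \<le> j" "t j \<noteq> t p"
    using assms unfolding constant_from_def by blast
  moreover from this have "p < j" using le_neq_implies_less by blast
  ultimately show ?thesis by blast
qed

lemma next_change_gt: "p < next_change T p"
proof (cases "\<exists>j>p. \<exists>t\<in>T. t j \<noteq> t p")
  case True
  show ?thesis using next_change_changes[OF True] by (rule conjunct1)
next
  case False
  show ?thesis unfolding next_change_def if_not_P[OF False] by simp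
qed

lemma next_change_block:
  assumes "t \<in> T" "p \<le> i" "i < next_change T p"
  shows "t i = t p"
proof (rule ccontr)
  assume "t i \<noteq> t p"
  with assms(1,2) have "p < i \<and> (\<exists>t\<in>T. t i \<noteq> t p)" using le_neq_implies_less by blast
  then have "(LEAST j. p < j \<and> (\<exists>t\<in>T. t j \<noteq> t p)) \<le> i" by (rule Least_le)
  with \<open>p < i \<and> _\<close> assms(3) show False unfolding next_change_def by (auto split: if_splits)
qed

lemma next_change_eqI:
  assumes "p < j" "\<exists>t\<in>T. t j \<noteq> t p" "\<And>t i. t \<in> T \<Longrightarrow> p \<le> i \<Longrightarrow> i < j \<Longrightarrow> t i = t p"
  shows "next_change T p = j"
proof -
  have ex: "\<exists>j>p. \<exists>t\<in>T. t j \<noteq> t p" using assms(1,2) by blast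
  have "(LEAST j. p < j \<and> (\<exists>t\<in>T. t j \<noteq> t p)) = j"
  proof (rule Least_equality)
    show "p < j \<and> (\<exists>t\<in>T. t j \<noteq> t p)" using assms(1,2) ..
  next
    fix i assume "p < i \<and> (\<exists>t\<in>T. t i \<noteq> t p)"
    then show "j \<le> i" using assms(3) by (meson less_imp_le not_le)
  qed
  then show ?thesis unfolding next_change_def if_P[OF ex] .
qed

definition stutter_reduction :: "'a team \<Rightarrow> (nat \<Rightarrow> nat) \<Rightarrow> bool" where
  "stutter_reduction T g \<longleftrightarrow> team_stuttering_fun T g \<and> stutter_free (team_at T g)"

lemma stutter_reduction_Suc:
  assumes red: "stutter_reduction T g" and nonconst: "\<not> constant_from T (g k)"
  shows "g (Suc k) = next_change T (g k)"
proof -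
  have stf: "team_stuttering_fun T g" using red unfolding stutter_reduction_def ..
  have "stutter_free (team_at T g)" using red unfolding stutter_reduction_def ..
  then have "(\<exists>t\<in>T. t (g k) \<noteq> t (g (Suc k))) \<or> constant_from T (g k)"
    unfolding stutter_free_team_at_iff[OF stf] by (rule spec)
  with nonconst obtain t where t: "t \<in> T" "t (g k) \<noteq> t (g (Suc k))" by (elim disjE bexE) auto
  have st: "stuttering_fun t g" if "t \<in> T" for t
    using stf that unfolding team_stuttering_fun_def by blast
  show ?thesis
  proof (rule next_change_eqI[symmetric])
    show "g k < g (Suc k)" using stuttering_funD(1)[OF st[OF t(1)]] by (simp add: strict_mono_Suc_iff)
    show "\<exists>t\<in>T. t (g (Suc k)) \<noteq> t (g k)" using not_sym[OF t(2)] t(1) by (rule bexI)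
    show "t' i = t' (g k)" if "t' \<in> T" "g k \<le> i" "i < g (Suc k)" for t' i
      by (rule stuttering_funD(3)[OF st[OF that(1)] that(2,3)])
  qed
qed

lemma stutter_reduction_unique:
  assumes g: "stutter_reduction T g" and h: "stutter_reduction T h"
  shows "team_at T g = team_at T h"
proof (cases "T = {}")
  case False
  then obtain t0 where "t0 \<in> T" by blast
  then have "stuttering_fun t0 g" "stuttering_fun t0 h"
    using g h unfolding stutter_reduction_def team_stuttering_fun_def by blast+
  note g_mono = stuttering_funD(1,2)[OF this(1)] and h_mono = stuttering_funD(1,2)[OF this(2)]
  text \<open>Once \<open>T\<close> is constant, \<open>g\<close> and \<open>h\<close> may diverge, but only to positions where every
    trace has the same value.\<close>
  have agree: "g k = h k \<or> (constant_from T (g k) \<and> constant_from T (h k))" for k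
  proof (induction k)
    case 0
    show ?case using g_mono h_mono by simp
  next
    case (Suc k)
    have "g k \<le> g (Suc k)" "h k \<le> h (Suc k)"
      by (simp_all add: strict_mono_less_eq[OF g_mono(1)] strict_mono_less_eq[OF h_mono(1)])
    then show ?case
      using Suc.IH stutter_reduction_Suc[OF g, of k] stutter_reduction_Suc[OF h, of k]
      by (metis constant_from_mono)
  qed
  have "(\<lambda>k. t (g k)) = (\<lambda>k. t (h k))" if "t \<in> T" for t
  proof
    fix k
    show "t (g k) = t (h k)"
      using agree[of k] constant_from_same_value[OF _ _ that] by metis
  qed
  then show ?thesis unfolding team_at_def trace_at_def by (rule image_cong[OF refl])
qed (simp add: team_at_def)

primrec destutter_fun :: "'a team \<Rightarrow> nat \<Rightarrow> nat" where
  "destutter_fun T 0 = 0"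
| "destutter_fun T (Suc k) = next_change T (destutter_fun T k)"

definition destutter :: "'a team \<Rightarrow> 'a team" where
  "destutter T = team_at T (destutter_fun T)"

lemma stutter_reduction_destutter_fun: "stutter_reduction T (destutter_fun T)"
proof -
  have "strict_mono (destutter_fun T)"
    unfolding strict_mono_Suc_iff by (simp add: next_change_gt)
  then have stf: "team_stuttering_fun T (destutter_fun T)"
    unfolding team_stuttering_fun_def stuttering_fun_def
  proof (intro ballI conjI allI impI)
    fix t k i assume t: "t \<in> T" and i: "destutter_fun T k \<le> i \<and> i < destutter_fun T (Suc k)"
    show "t i = t (destutter_fun T k)" by (rule next_change_block[OF t]) (use i in simp_all)
  qed simp_all
  have "stutter_free (team_at T (destutter_fun T))"
    unfolding stutter_free_team_at_iff[OF stf]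
  proof
    fix k
    show "(\<exists>t\<in>T. t (destutter_fun T k) \<noteq> t (destutter_fun T (Suc k))) \<or> constant_from T (destutter_fun T k)"
      using next_change_changes[OF not_constant_from_change] by (metis destutter_fun.simps(2) not_sym)
  qed
  with stf show ?thesis unfolding stutter_reduction_def ..
qed

lemma stutter_free_destutter: "stutter_free (destutter T)"
  using stutter_reduction_destutter_fun unfolding stutter_reduction_def destutter_def by blast

lemma stutter_reduction_destutter:
  assumes "stutter_reduction T g"
  shows "team_at T g = destutter T"
  unfolding destutter_def by (rule stutter_reduction_unique[OF assms stutter_reduction_destutter_fun])

lemma stutter_free_team_at:
  assumes free: "stutter_free T" and f: "team_stuttering_fun T f"
  shows "stutter_free (team_at T f)"
  unfolding stutter_free_team_at_iff[OF f]
proof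
  fix k
  have "(\<exists>t\<in>T. t (f k) \<noteq> t (Suc (f k))) \<or> constant_from T (f k)"
    using free unfolding stutter_free_iff by (rule spec)
  then show "(\<exists>t\<in>T. t (f k) \<noteq> t (f (Suc k))) \<or> constant_from T (f k)"
  proof
    assume "\<exists>t\<in>T. t (f k) \<noteq> t (Suc (f k))"
    then obtain t where t: "t \<in> T" "t (f k) \<noteq> t (Suc (f k))" ..
    have st: "stuttering_fun t f" using f t(1) unfolding team_stuttering_fun_def ..
    text \<open>A change right after \<open>f k\<close> cannot lie inside a block, so \<open>f (k+1) = f k + 1\<close>.\<close>
    have "f k < f (Suc k)" using stuttering_funD(1)[OF st] by (simp add: strict_mono_Suc_iff)
    moreover have "\<not> Suc (f k) < f (Suc k)"
      using stuttering_funD(3)[OF st, of k "Suc (f k)"] t(2) by auto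
    ultimately have "Suc (f k) = f (Suc k)" by simp
    then show ?thesis using t by metis
  qed simp
qed

lemma team_at_id: "team_at T id = T"
  unfolding team_at_def trace_at_def by simp

lemma team_at_stutter_free:
  assumes "stutter_free T" "team_stuttering_fun T f"
  shows "team_at T f = T"
proof -
  have "team_stuttering_fun T id"
    unfolding team_stuttering_fun_def stuttering_fun_def
  proof (intro ballI conjI allI impI)
    fix t :: "'a trace" and k i :: nat
    assume "id k \<le> i \<and> i < id (Suc k)"
    then have "i = k" by simp
    then show "t i = t (id k)" by simp
  qed (simp_all add: strict_mono_def)
  then have "stutter_reduction T id" using assms(1) unfolding stutter_reduction_def team_at_id by blast
  moreover have "stutter_reduction T f"
    using assms stutter_free_team_at unfolding stutter_reduction_def by blast
  ultimately show ?thesis using stutter_reduction_unique team_at_id by metis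
qed

lemma destutter_stutter_free: "stutter_free T \<Longrightarrow> destutter T = T"
  using team_at_stutter_free stutter_reduction_destutter_fun
  unfolding destutter_def stutter_reduction_def by blast

lemma team_at_comp: "team_at (team_at T f) g = team_at T (f \<circ> g)"
  unfolding team_at_def trace_at_def by (auto simp: image_image)

lemma team_stuttering_fun_comp:
  assumes f: "team_stuttering_fun T f" and g: "team_stuttering_fun (team_at T f) g"
  shows "team_stuttering_fun T (f \<circ> g)"
  unfolding team_stuttering_fun_def stuttering_fun_def
proof (intro ballI conjI allI impI)
  fix t assume t: "t \<in> T"
  have sf: "stuttering_fun t f" using f t unfolding team_stuttering_fun_def by blast
  have sg: "stuttering_fun (\<lambda>k. t (f k)) g"
    using g unfolding team_stuttering_fun_def ball_team_at using t by (rule bspec)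
  note f_mono = stuttering_funD(1,2)[OF sf] and g_mono = stuttering_funD(1,2)[OF sg]
  show "strict_mono (f \<circ> g)" using f_mono g_mono by (simp add: strict_mono_def)
  show "(f \<circ> g) 0 = 0" using f_mono g_mono by simp
  fix k i assume i: "(f \<circ> g) k \<le> i \<and> i < (f \<circ> g) (Suc k)"
  obtain m where m: "f m \<le> i" "i < f (Suc m)" using strict_mono_block[OF f_mono] .
  have "g k \<le> m" "m < g (Suc k)"
    using i m strict_mono_less[OF f_mono(1)] by (metis comp_apply le_less_trans less_Suc_eq_le)+
  then have "t (f m) = t (f (g k))" using stuttering_funD(3)[OF sg] by blast
  then show "t i = t ((f \<circ> g) k)" using stuttering_funD(3)[OF sf m] by simp
qed

lemma destutter_team_at:
  assumes f: "team_stuttering_fun T f"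
  shows "destutter (team_at T f) = destutter T"
proof -
  have r: "stutter_reduction (team_at T f) (destutter_fun (team_at T f))"
    by (rule stutter_reduction_destutter_fun)
  have "stutter_reduction T (f \<circ> destutter_fun (team_at T f))"
    using r team_stuttering_fun_comp[OF f]
    unfolding stutter_reduction_def team_at_comp by blast
  then show ?thesis
    using stutter_reduction_destutter unfolding destutter_def team_at_comp by metis
qed

lemma stutter_equiv_iff_destutter: "stutter_equiv T T' \<longleftrightarrow> destutter T = destutter T'"
proof
  assume "stutter_equiv T T'"
  then show "destutter T = destutter T'"
    unfolding stutter_equiv_def by (metis destutter_team_at)
next
  assume "destutter T = destutter T'"
  then show "stutter_equiv T T'"
    using stutter_reduction_destutter_fun
    unfolding stutter_equiv_def destutter_def stutter_reduction_def by blast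
qed

lemma stutter_free_equiv_iff: "stutter_free S \<Longrightarrow> stutter_equiv T S \<longleftrightarrow> S = destutter T"
  using stutter_equiv_iff_destutter destutter_stutter_free stutter_free_destutter by metis

theorem mainTheorem6:
  shows "(\<forall>(T::'a team) f. stutter_free T \<and> team_stuttering_fun T f \<longrightarrow> T = team_at T f)
    \<and> (\<forall>T::'a team. \<exists>!T'. stutter_free T' \<and> stutter_equiv T T')
    \<and> (\<forall>T::'a team. stutter_equiv T T)
    \<and> (\<forall>T T'::'a team. stutter_equiv T T' \<longrightarrow> stutter_equiv T' T)
    \<and> (\<forall>T T' T''::'a team. stutter_equiv T T' \<and> stutter_equiv T' T'' \<longrightarrow> stutter_equiv T T'')
    \<and> (\<forall>T::'a team. \<exists>!S. S \<in> {U. stutter_equiv T U} \<and> stutter_free S)"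
proof (intro conjI allI impI)
  fix T :: "'a team"
  have unique: "\<exists>!S. stutter_free S \<and> stutter_equiv T S"
    using stutter_free_destutter stutter_free_equiv_iff by blast
  then show "\<exists>!S. stutter_free S \<and> stutter_equiv T S" .
  show "\<exists>!S. S \<in> {U. stutter_equiv T U} \<and> stutter_free S"
    using unique by (simp add: conj_commute)
  show "stutter_equiv T T" by (simp add: stutter_equiv_iff_destutter)
qed (auto simp: stutter_equiv_iff_destutter team_at_stutter_free)

end
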